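(* For $\epsilon\in[0,1)$ define sequences $\{p_j(\epsilon)\}_{j\in\mathbb N}$ and $\{p'_j(\epsilon)\}_{j\in\mathbb N}$ by $p_1(\epsilon)=2+\epsilon$, $p'_1(\epsilon)=1+\epsilon$, $p_{j+1}(\epsilon)=2+\epsilon-1/p_j(\epsilon)$, $p'_{j+1}(\epsilon)=2+\epsilon-1/p'_j(\epsilon)$, and let $p_+(\epsilon)=1+\epsilon/2+\sqrt{\epsilon+\epsilon^2/4}$. For $l\in\mathbb N$ let $M(l)$ be the $l\times l$ matrix with entries $2\delta_{i_1i_2}-1_{\{|i_1-i_2|=1\}}$ and $I_l$ the identity. Then: 1. $1\le p'_j(\epsilon)\le p_+(\epsilon)<p_j(\epsilon)\le1+1/j+j\epsilon$ for all $j\in\mathbb N$; $\{p_j(\epsilon)\}_j$ is monotone decreasing and $\{p'_j(\epsilon)\}_j$ is monotone nondecreasing. 2. For every $l\in\mathbb N$, the sequence $\{((\epsilon I_l+M(l))^{-1})_{kk}\}_{k=1}^{[l/2]}$ is monotone increasing. 3. For $j\ge2$, $p_j(\epsilon)-p_+(\epsilon)\le(1+\sqrt\epsilon)^{-(j-2)}$ and $p_+(\epsilon)-p'_j(\epsilon)\le\sqrt\epsilon(1+\sqrt\epsilon)^{-(j-2)}$. 4. For every $k\ge2$, $\prod_{j=1}^kp'_j(\epsilon)=(p_k(\epsilon)-1)\prod_{j=1}^{k-1}p_j(\epsilon)$. *)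

theory Defs
  imports Complex_Main "Jordan_Normal_Form.Gauss_Jordan_Elimination"
begin

text \<open>The sequences p_j and p'_j, indexed from j = 1 as in the paper
  (the value at index 0 is an unused dummy).\<close>
fun pseq :: "real \<Rightarrow> nat \<Rightarrow> real" where
  "pseq e 0 = 0"
| "pseq e (Suc 0) = 2 + e"
| "pseq e (Suc (Suc n)) = 2 + e - 1 / pseq e (Suc n)"

fun pseq' :: "real \<Rightarrow> nat \<Rightarrow> real" where
  "pseq' e 0 = 0"
| "pseq' e (Suc 0) = 1 + e"
| "pseq' e (Suc (Suc n)) = 2 + e - 1 / pseq' e (Suc n)"

definition pplus :: "real \<Rightarrow> real" where
  "pplus e = 1 + e / 2 + sqrt (e + e^2 / 4)"

text \<open>M(l): l x l matrix with entries 2 delta_{ij} - 1_{|i-j|=1}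
  (JNF matrices are 0-indexed).\<close>
definition Mmat :: "nat \<Rightarrow> real mat" where
  "Mmat l = mat l l (\<lambda>(i, j). (if i = j then 2 else 0) - (if i = j + 1 \<or> j = i + 1 then 1 else 0))"

definition Ginv :: "real \<Rightarrow> nat \<Rightarrow> real mat" where
  "Ginv e l = the (mat_inverse (e \<cdot>\<^sub>m 1\<^sub>m l + Mmat l))"

end

theory Submission
  imports Defs "Jordan_Normal_Form.Determinant"
begin

text \<open>Both sequences are orbits of the map \<open>f(x) = 2 + e - 1/x\<close>, which is increasing for
  \<open>x > 0\<close> and fixes \<open>p\<^sub>+\<close>, the larger root of \<open>x\<^sup>2 - (2 + e) x + 1\<close>. Monotonicity of the
  map gives all order relations. Since \<open>f(x) - p\<^sub>+ = (x - p\<^sub>+) / (x p\<^sub>+)\<close> and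
  \<open>x p\<^sub>+ \<ge> 1 + \<surd>e\<close> for \<open>x \<ge> 1\<close>, the map contracts towards \<open>p\<^sub>+\<close>, which gives the rates.

  With \<open>U\<^sub>0 = 0, U\<^sub>1 = 1, U\<^sub>n\<^sub>+\<^sub>2 = (2 + e) U\<^sub>n\<^sub>+\<^sub>1 - U\<^sub>n\<close> one has \<open>p\<^sub>j = U\<^sub>j\<^sub>+\<^sub>1 / U\<^sub>j\<close> and
  \<open>p'\<^sub>j = (U\<^sub>j\<^sub>+\<^sub>1 - U\<^sub>j) / (U\<^sub>j - U\<^sub>j\<^sub>-\<^sub>1)\<close>, so both products telescope. The inverse of
  \<open>e I + M(l)\<close> has entries \<open>U\<^bsub>min(i,j)+1\<^esub> U\<^bsub>l-max(i,j)\<^esub> / U\<^sub>l\<^sub>+\<^sub>1\<close>, so by a Cassini-type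
  identity consecutive diagonal entries differ by \<open>U\<^bsub>l-2k\<^esub> / U\<^sub>l\<^sub>+\<^sub>1 > 0\<close>.\<close>

section \<open>Chebyshev polynomials of the second kind\<close>

text \<open>\<open>chebU a n = U\<^sub>n\<^sub>-\<^sub>1(a/2)\<close>.\<close>

fun chebU :: "real \<Rightarrow> nat \<Rightarrow> real" where
  "chebU a 0 = 0"
| "chebU a (Suc 0) = 1"
| "chebU a (Suc (Suc n)) = a * chebU a (Suc n) - chebU a n"

lemma chebU_increments:
  assumes "2 \<le> a"
  shows chebU_Suc_minus_ge_1: "1 \<le> chebU a (Suc n) - chebU a n"
    and chebU_ge_index: "real n \<le> chebU a n"
proof -
  have "1 \<le> chebU a (Suc n) - chebU a n \<and> real n \<le> chebU a n"
  proof (induction n)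
    case 0
    then show ?case by simp
  next
    case (Suc n)
    have "chebU a (Suc (Suc n)) - chebU a (Suc n)
        = (a - 2) * chebU a (Suc n) + (chebU a (Suc n) - chebU a n)"
      by (simp add: algebra_simps)
    moreover have "0 \<le> (a - 2) * chebU a (Suc n)"
      using assms Suc by simp
    ultimately show ?case
      using Suc by simp
  qed
  then show "1 \<le> chebU a (Suc n) - chebU a n" "real n \<le> chebU a n"
    by auto
qed

lemma chebU_pos: "2 \<le> a \<Longrightarrow> 0 < n \<Longrightarrow> 0 < chebU a n"
  using chebU_ge_index[of a n] by linarith

lemma chebU_add: "chebU a (m + n + 1) = chebU a (m + 1) * chebU a (n + 1) - chebU a m * chebU a n"
proof (induction m arbitrary: n)
  case 0
  then show ?case by simp
next
  case (Suc m)
  have "chebU a (Suc m + n + 1) = chebU a (m + (n + 1) + 1)"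
    by simp
  also have "\<dots> = chebU a (m + 1) * chebU a (n + 2) - chebU a m * chebU a (n + 1)"
    using Suc[of "n + 1"] by simp
  also have "\<dots> = chebU a (m + 2) * chebU a (n + 1) - chebU a (m + 1) * chebU a n"
    by (simp add: algebra_simps)
  finally show ?case
    by simp
qed

lemma chebU_cassini:
  "chebU a (k + 1) * chebU a (n + k) - chebU a k * chebU a (n + k + 1) = chebU a n"
proof (induction k)
  case 0
  then show ?case by simp
next
  case (Suc k)
  have "chebU a (Suc k + 1) * chebU a (n + Suc k) - chebU a (Suc k) * chebU a (n + Suc k + 1)
      = chebU a (k + 1) * chebU a (n + k) - chebU a k * chebU a (n + k + 1)"
    by (simp add: algebra_simps)
  then show ?case
    using Suc by simp
qed

section \<open>The inverse of \<open>e I + M(l)\<close>\<close>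

text \<open>The Green's function of the second difference operator \<open>a f(k) - f(k - 1) - f(k + 1)\<close>
  on \<open>{0..L}\<close> with Dirichlet conditions \<open>f(0) = f(L) = 0\<close> and source at \<open>J\<close>.\<close>

definition chebU_green :: "real \<Rightarrow> nat \<Rightarrow> nat \<Rightarrow> nat \<Rightarrow> real" where
  "chebU_green a L J k = chebU a (min k J) * chebU a (L - max k J)"

lemma chebU_green_recurrence:
  assumes "k + 2 \<le> L"
  shows "a * chebU_green a L J (k + 1) - chebU_green a L J k - chebU_green a L J (k + 2)
       = (if k + 1 = J then chebU a L else 0)"
proof (cases "k + 1" J rule: linorder_cases)
  case less
  then have "chebU_green a L J i = chebU a i * chebU a (L - J)" if "i \<le> k + 2" for i
    using that by (simp add: chebU_green_def)
  then show ?thesis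
    using less by (simp add: algebra_simps)
next
  case equal
  have "chebU a L = chebU a (J + (L - J - 1) + 1)"
    using assms equal by simp
  also have "\<dots> = chebU a (J + 1) * chebU a (L - J) - chebU a J * chebU a (L - J - 1)"
    using assms equal by (simp only: chebU_add) (simp add: Suc_diff_Suc)
  finally have "chebU a L = chebU a (J + 1) * chebU a (L - J) - chebU a J * chebU a (L - J - 1)" .
  moreover have "a * chebU_green a L J (k + 1) - chebU_green a L J k - chebU_green a L J (k + 2)
      = (a * chebU a J - chebU a k) * chebU a (L - J) - chebU a J * chebU a (L - J - 1)"
    using equal by (simp add: chebU_green_def left_diff_distrib)
  ultimately show ?thesis
    using equal by auto
next
  case greater
  then have "chebU_green a L J i = chebU a J * chebU a (L - i)" if "k \<le> i" for i
    using that by (simp add: chebU_green_def)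
  moreover have "L - k = Suc (Suc (L - (k + 2)))" "L - (k + 1) = Suc (L - (k + 2))"
    using assms by auto
  ultimately show ?thesis
    using greater by (simp add: algebra_simps)
qed

text \<open>Shifting the index by one lets the first and last rows obey the same three-term formula,
  with the boundary values \<open>f 0 = f (l + 1) = 0\<close>.\<close>

lemma Mmat_row_sum:
  assumes "i < l" and "f 0 = 0" and "f (l + 1) = 0"
  shows "(\<Sum>k = 0..<l. (e \<cdot>\<^sub>m 1\<^sub>m l + Mmat l) $$ (i, k) * f (k + 1))
       = (2 + e) * f (i + 1) - f i - f (i + 2)"
proof -
  have "(\<Sum>k = 0..<l. (e \<cdot>\<^sub>m 1\<^sub>m l + Mmat l) $$ (i, k) * f (k + 1))
      = (\<Sum>k = 0..<l. (if k = i then (2 + e) * f (k + 1) else 0)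
                     - (if k + 1 = i then f (k + 1) else 0) - (if k = i + 1 then f (k + 1) else 0))"
    using assms(1) by (intro sum.cong) (auto simp: Mmat_def algebra_simps)
  also have "\<dots> = (2 + e) * f (i + 1) - (if 0 < i then f i else 0)
                   - (if i + 1 < l then f (i + 2) else 0)"
    using assms(1) by (cases i) (simp_all add: sum_subtractf)
  also have "\<dots> = (2 + e) * f (i + 1) - f i - f (i + 2)"
    using assms by (cases i) (auto simp: not_less le_Suc_eq)
  finally show ?thesis .
qed

definition tridiag_inverse :: "real \<Rightarrow> nat \<Rightarrow> real mat" where
  "tridiag_inverse e l =
     mat l l (\<lambda>(i, j). chebU_green (2 + e) (l + 1) (j + 1) (i + 1) / chebU (2 + e) (l + 1))"

lemma Mmat_mult_tridiag_inverse:
  assumes "chebU (2 + e) (l + 1) \<noteq> 0"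
  shows "(e \<cdot>\<^sub>m 1\<^sub>m l + Mmat l) * tridiag_inverse e l = 1\<^sub>m l"
proof (rule eq_matI)
  fix i j
  assume "i < dim_row (1\<^sub>m l)" and "j < dim_col (1\<^sub>m l)"
  then have i: "i < l" and j: "j < l"
    by auto
  define f where "f k = chebU_green (2 + e) (l + 1) (j + 1) k / chebU (2 + e) (l + 1)" for k
  have "((e \<cdot>\<^sub>m 1\<^sub>m l + Mmat l) * tridiag_inverse e l) $$ (i, j)
      = (\<Sum>k = 0..<l. (e \<cdot>\<^sub>m 1\<^sub>m l + Mmat l) $$ (i, k) * f (k + 1))"
    using i j by (auto simp: scalar_prod_def Mmat_def tridiag_inverse_def f_def intro!: sum.cong)
  also have "\<dots> = (2 + e) * f (i + 1) - f i - f (i + 2)"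
    using i by (intro Mmat_row_sum) (simp_all add: f_def chebU_green_def)
  also have "\<dots> = ((2 + e) * chebU_green (2 + e) (l + 1) (j + 1) (i + 1)
                   - chebU_green (2 + e) (l + 1) (j + 1) i
                   - chebU_green (2 + e) (l + 1) (j + 1) (i + 2)) / chebU (2 + e) (l + 1)"
    by (simp add: f_def diff_divide_distrib)
  also have "\<dots> = 1\<^sub>m l $$ (i, j)"
    using i j assms by (subst chebU_green_recurrence) auto
  finally show "((e \<cdot>\<^sub>m 1\<^sub>m l + Mmat l) * tridiag_inverse e l) $$ (i, j) = 1\<^sub>m l $$ (i, j)" .
qed (auto simp: Mmat_def tridiag_inverse_def)

lemma mat_inverse_eq_Some:
  fixes A B :: "'a :: field mat"
  assumes A: "A \<in> carrier_mat n n" and B: "B \<in> carrier_mat n n" and AB: "A * B = 1\<^sub>m n"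
  shows "mat_inverse A = Some B"
proof -
  have BA: "B * A = 1\<^sub>m n"
    using mat_mult_left_right_inverse[OF A B AB] .
  have "A \<in> Units (ring_mat TYPE('a) n ())"
    using A B AB BA unfolding Units_def by (auto simp: ring_mat_def)
  then obtain C where C: "mat_inverse A = Some C"
    using mat_inverse(1)[OF A] by fastforce
  then have AC: "A * C = 1\<^sub>m n" and C_carrier: "C \<in> carrier_mat n n"
    using mat_inverse(2)[OF A] by auto
  have "C = (B * A) * C"
    using BA C_carrier by simp
  also have "\<dots> = B * (A * C)"
    by (rule assoc_mult_mat[OF B A C_carrier])
  finally show ?thesis
    using AC B C by simp
qed

lemma Ginv_eq_tridiag_inverse:
  assumes "chebU (2 + e) (l + 1) \<noteq> 0"
  shows "Ginv e l = tridiag_inverse e l"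
  using mat_inverse_eq_Some[OF _ _ Mmat_mult_tridiag_inverse[OF assms]]
  by (simp add: Ginv_def Mmat_def tridiag_inverse_def)

lemma tridiag_inverse_diagonal_step:
  assumes "1 \<le> k" and "2 * k \<le> l"
  shows "tridiag_inverse e l $$ (k, k) - tridiag_inverse e l $$ (k - 1, k - 1)
       = chebU (2 + e) (l - 2 * k) / chebU (2 + e) (l + 1)"
proof -
  let ?n = "l - 2 * k"
  have "l - k = ?n + k" "l + 1 - k = ?n + k + 1"
    using assms by auto
  then have "tridiag_inverse e l $$ (k, k) - tridiag_inverse e l $$ (k - 1, k - 1)
      = (chebU (2 + e) (k + 1) * chebU (2 + e) (?n + k)
         - chebU (2 + e) k * chebU (2 + e) (?n + k + 1)) / chebU (2 + e) (l + 1)"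
    using assms by (simp add: tridiag_inverse_def chebU_green_def diff_divide_distrib)
  then show ?thesis
    by (simp only: chebU_cassini)
qed

lemma Ginv_diagonal_less:
  assumes "0 \<le> e" and "1 \<le> k" and "2 * k < l"
  shows "Ginv e l $$ (k - 1, k - 1) < Ginv e l $$ (k, k)"
proof -
  have "0 < chebU (2 + e) (l - 2 * k)" and U_pos: "0 < chebU (2 + e) (l + 1)"
    using assms by (auto intro!: chebU_pos)
  then have "0 < tridiag_inverse e l $$ (k, k) - tridiag_inverse e l $$ (k - 1, k - 1)"
    using assms tridiag_inverse_diagonal_step[of k l e] by simp
  then show ?thesis
    using U_pos by (simp add: Ginv_eq_tridiag_inverse)
qed

definition pstep :: "real \<Rightarrow> real \<Rightarrow> real" where
  "pstep e x = 2 + e - 1 / x"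

lemma pseq_Suc: "1 \<le> j \<Longrightarrow> pseq e (Suc j) = pstep e (pseq e j)"
  by (cases j) (auto simp: pstep_def)

lemma pseq'_Suc: "1 \<le> j \<Longrightarrow> pseq' e (Suc j) = pstep e (pseq' e j)"
  by (cases j) (auto simp: pstep_def)

lemma pstep_strict_mono: "0 < x \<Longrightarrow> x < y \<Longrightarrow> pstep e x < pstep e y"
  by (simp add: pstep_def frac_less2)

lemma pstep_mono: "0 < x \<Longrightarrow> x \<le> y \<Longrightarrow> pstep e x \<le> pstep e y"
  by (simp add: pstep_def frac_le)

lemma pplus_bounds:
  assumes "0 \<le> e"
  shows pplus_ge_1_plus_sqrt: "1 + sqrt e \<le> pplus e"
    and pplus_ge_1_plus: "1 + e \<le> pplus e"
    and pplus_le: "pplus e \<le> 1 + e + sqrt e"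
    and pplus_less: "pplus e < 2 + e"
proof -
  have "sqrt e \<le> sqrt (e + e^2 / 4)"
    by (rule real_sqrt_le_mono) simp
  then show "1 + sqrt e \<le> pplus e"
    using assms unfolding pplus_def by linarith
  have "sqrt ((e / 2)^2) \<le> sqrt (e + e^2 / 4)"
    using assms by (intro real_sqrt_le_mono) (simp add: power2_eq_square)
  then show "1 + e \<le> pplus e"
    using assms by (simp add: pplus_def)
  have "sqrt (e + e^2 / 4) \<le> sqrt ((sqrt e + e / 2)^2)"
    using assms by (intro real_sqrt_le_mono) (simp add: power2_eq_square algebra_simps)
  then show "pplus e \<le> 1 + e + sqrt e"
    using assms by (simp add: pplus_def)
  have "sqrt (e + e^2 / 4) < sqrt ((1 + e / 2)^2)"
    using assms by (intro real_sqrt_less_mono) (simp add: power2_eq_square algebra_simps)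
  then show "pplus e < 2 + e"
    using assms by (simp add: pplus_def)
qed

lemma pplus_pos: "0 \<le> e \<Longrightarrow> 0 < pplus e"
  using pplus_ge_1_plus[of e] by simp

lemma pstep_pplus:
  assumes "0 \<le> e"
  shows "pstep e (pplus e) = pplus e"
proof -
  have "sqrt (e + e^2 / 4) * sqrt (e + e^2 / 4) = e + e^2 / 4"
    using assms by simp
  then have "pplus e * pplus e = (2 + e) * pplus e - 1"
    unfolding pplus_def by (simp add: algebra_simps power2_eq_square)
  then show ?thesis
    using pplus_pos[OF assms] by (simp add: pstep_def field_simps)
qed

lemma pstep_dist_pplus:
  assumes "0 \<le> e" and "1 \<le> x"
  shows "\<bar>pstep e x - pplus e\<bar> \<le> \<bar>x - pplus e\<bar> / (1 + sqrt e)"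
proof -
  have P: "1 + sqrt e \<le> pplus e"
    by (rule pplus_ge_1_plus_sqrt[OF assms(1)])
  have "pstep e x - pplus e = pstep e x - pstep e (pplus e)"
    using pstep_pplus[OF assms(1)] by simp
  also have "\<dots> = (x - pplus e) / (x * pplus e)"
    using assms pplus_pos[OF assms(1)] by (simp add: pstep_def field_simps)
  finally have "\<bar>pstep e x - pplus e\<bar> = \<bar>x - pplus e\<bar> / (x * pplus e)"
    using assms pplus_pos[OF assms(1)] by (simp add: abs_mult)
  also have "\<dots> \<le> \<bar>x - pplus e\<bar> / (1 + sqrt e)"
  proof (rule divide_left_mono)
    have "1 + sqrt e \<le> 1 * pplus e"
      using P by simp
    also have "\<dots> \<le> x * pplus e"
      using assms pplus_pos[OF assms(1)] by (intro mult_right_mono) auto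
    finally show "1 + sqrt e \<le> x * pplus e" .
  qed (use assms pplus_pos[OF assms(1)] in \<open>auto intro!: mult_pos_pos add_pos_nonneg\<close>)
  finally show ?thesis .
qed

lemma pstep_orbit_dist_pplus:
  assumes "0 \<le> e" and "\<And>j. m \<le> j \<Longrightarrow> 1 \<le> x j \<and> x (Suc j) = pstep e (x j)"
    and "m \<le> k"
  shows "\<bar>x k - pplus e\<bar> \<le> \<bar>x m - pplus e\<bar> / (1 + sqrt e) ^ (k - m)"
  using assms(3)
proof (induction k rule: dec_induct)
  case base
  then show ?case by simp
next
  case (step k)
  have "\<bar>x (Suc k) - pplus e\<bar> \<le> \<bar>x k - pplus e\<bar> / (1 + sqrt e)"
    using assms(2)[of k] step(1) pstep_dist_pplus[OF assms(1), of "x k"] by simp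
  also have "\<dots> \<le> (\<bar>x m - pplus e\<bar> / (1 + sqrt e) ^ (k - m)) / (1 + sqrt e)"
    using step assms(1) by (intro divide_right_mono) auto
  also have "\<dots> = \<bar>x m - pplus e\<bar> / (1 + sqrt e) ^ (Suc k - m)"
    using step(1) by (simp add: Suc_diff_le mult.commute)
  finally show ?case .
qed

lemma pstep_linear_bound:
  assumes "0 \<le> e" and "1 \<le> t" and "0 < x" and "x \<le> 1 + 1 / t + t * e"
  shows "pstep e x \<le> 1 + 1 / (t + 1) + (t + 1) * e"
proof -
  have D: "0 < t + 1 + t^2 * e"
    using assms by (simp add: add_pos_nonneg)
  have "pstep e x \<le> 2 + e - 1 / (1 + 1 / t + t * e)"
    using pstep_mono[OF assms(3,4)] by (simp add: pstep_def)
  also have "1 + 1 / t + t * e = (t + 1 + t^2 * e) / t"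
    using assms by (simp add: field_simps power2_eq_square)
  also have "2 + e - 1 / ((t + 1 + t^2 * e) / t) = 1 + e + (1 + t^2 * e) / (t + 1 + t^2 * e)"
    using D by (simp add: field_simps)
  also have "\<dots> \<le> 1 + e + (1 + t^2 * e) / (t + 1)"
    using assms D by (intro add_left_mono divide_left_mono) auto
  also have "\<dots> = 1 + 1 / (t + 1) + e + t^2 * e / (t + 1)"
    by (simp add: add_divide_distrib)
  also have "t^2 * e / (t + 1) \<le> t * e"
    using assms by (simp add: field_simps power2_eq_square mult_left_mono)
  finally show ?thesis
    by (simp add: algebra_simps)
qed

lemma pseq_bounds:
  assumes "0 \<le> e" and "1 \<le> j"
  shows "pplus e < pseq e j \<and> pseq e (Suc j) < pseq e j \<and> pseq e j \<le> 1 + 1 / real j + real j * e"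
  using assms(2)
proof (induction j rule: dec_induct)
  case base
  have "pseq e 2 = 2 + e - 1 / (2 + e)"
    by (simp add: numeral_2_eq_2)
  then show ?case
    using assms(1) pplus_less[OF assms(1)] by (simp add: numeral_2_eq_2)
next
  case (step n)
  note p_Suc = pseq_Suc[OF step(1)] pseq_Suc[of "Suc n" e]
  have "pstep e (pplus e) < pstep e (pseq e n)"
    using step pplus_pos[OF assms(1)] by (intro pstep_strict_mono) auto
  then have "pplus e < pseq e (Suc n)"
    using pstep_pplus[OF assms(1)] p_Suc by (simp del: pseq.simps)
  moreover have "pseq e (Suc (Suc n)) < pseq e (Suc n)"
    using step calculation pplus_pos[OF assms(1)] pstep_strict_mono[of "pseq e (Suc n)" "pseq e n" e] p_Suc
    by (simp del: pseq.simps)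
  moreover have "pstep e (pseq e n) \<le> 1 + 1 / (real n + 1) + (real n + 1) * e"
    using step pplus_pos[OF assms(1)] by (intro pstep_linear_bound[OF assms(1)]) auto
  then have "pseq e (Suc n) \<le> 1 + 1 / real (Suc n) + real (Suc n) * e"
    using p_Suc by (simp del: pseq.simps add: add.commute)
  ultimately show ?case
    by blast
qed

lemma pseq'_bounds:
  assumes "0 \<le> e" and "1 \<le> j"
  shows "1 \<le> pseq' e j \<and> pseq' e j \<le> pplus e \<and> pseq' e j \<le> pseq' e (Suc j)"
  using assms(2)
proof (induction j rule: dec_induct)
  case base
  have "pseq' e 2 = 2 + e - 1 / (1 + e)"
    by (simp add: numeral_2_eq_2)
  then show ?case
    using assms(1) pplus_ge_1_plus[OF assms(1)] by (simp add: numeral_2_eq_2)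
next
  case (step n)
  note p'_Suc = pseq'_Suc[OF step(1)] pseq'_Suc[of "Suc n" e]
  have "1 \<le> pseq' e (Suc n)"
    using step assms(1) p'_Suc by (simp del: pseq'.simps add: pstep_def)
  moreover have "pseq' e (Suc n) \<le> pplus e"
    using step pstep_mono[of "pseq' e n" "pplus e" e] pstep_pplus[OF assms(1)] p'_Suc
    by (simp del: pseq'.simps)
  moreover have "pseq' e (Suc n) \<le> pseq' e (Suc (Suc n))"
    using step pstep_mono[of "pseq' e n" "pseq' e (Suc n)" e] p'_Suc
    by (simp del: pseq'.simps)
  ultimately show ?case
    by blast
qed

lemma pseq_minus_pplus_le:
  assumes "0 \<le> e" and "2 \<le> j"
  shows "pseq e j - pplus e \<le> 1 / (1 + sqrt e) ^ (j - 2)"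
proof -
  have "pseq e 2 - pplus e = 1 / pplus e - 1 / (2 + e)"
    using pstep_pplus[OF assms(1)] by (simp add: numeral_2_eq_2 pstep_def)
  moreover have "1 / pplus e \<le> 1" and "0 < 1 / (2 + e)"
    using pplus_ge_1_plus[OF assms(1)] assms(1) by simp_all
  moreover have "pplus e < pseq e 2"
    using pseq_bounds[OF assms(1), of 2] by simp
  ultimately have "\<bar>pseq e 2 - pplus e\<bar> \<le> 1"
    unfolding abs_le_iff by linarith
  moreover have "1 \<le> pseq e n \<and> pseq e (Suc n) = pstep e (pseq e n)" if "2 \<le> n" for n
    using that pseq_bounds[OF assms(1), of n] pplus_ge_1_plus[OF assms(1)] assms(1) pseq_Suc[of n e]
    by simp
  then have "\<bar>pseq e j - pplus e\<bar> \<le> \<bar>pseq e 2 - pplus e\<bar> / (1 + sqrt e) ^ (j - 2)"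
    using assms(2) by (rule pstep_orbit_dist_pplus[OF assms(1)])
  ultimately show ?thesis
    using divide_right_mono[of _ 1 "(1 + sqrt e) ^ (j - 2)"] assms(1) by fastforce
qed

lemma pplus_minus_pseq'_le:
  assumes "0 \<le> e" and "2 \<le> j"
  shows "pplus e - pseq' e j \<le> sqrt e / (1 + sqrt e) ^ (j - 2)"
proof -
  have "1 + e \<le> pseq' e 2"
    using assms(1) by (simp add: numeral_2_eq_2)
  moreover have "pseq' e 2 \<le> pplus e"
    using pseq'_bounds[OF assms(1), of 2] by simp
  ultimately have "\<bar>pseq' e 2 - pplus e\<bar> \<le> sqrt e"
    using pplus_le[OF assms(1)] unfolding abs_le_iff by linarith
  moreover have "1 \<le> pseq' e n \<and> pseq' e (Suc n) = pstep e (pseq' e n)" if "2 \<le> n" for n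
    using that pseq'_bounds[OF assms(1), of n] pseq'_Suc[of n e] by simp
  then have "\<bar>pseq' e j - pplus e\<bar> \<le> \<bar>pseq' e 2 - pplus e\<bar> / (1 + sqrt e) ^ (j - 2)"
    using assms(2) by (rule pstep_orbit_dist_pplus[OF assms(1)])
  ultimately show ?thesis
    using divide_right_mono[of _ "sqrt e" "(1 + sqrt e) ^ (j - 2)"] assms(1) by fastforce
qed

lemma pseq_eq_chebU_ratio:
  assumes "0 \<le> e" and "1 \<le> j"
  shows "pseq e j = chebU (2 + e) (j + 1) / chebU (2 + e) j"
  using assms(2)
proof (induction j rule: dec_induct)
  case base
  then show ?case by simp
next
  case (step j)
  have "0 < chebU (2 + e) j" "0 < chebU (2 + e) (j + 1)"
    using chebU_pos[of "2 + e"] assms(1) step(1) by auto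
  then have "2 + e - chebU (2 + e) j / chebU (2 + e) (j + 1) = chebU (2 + e) (Suc j + 1) / chebU (2 + e) (Suc j)"
    by (simp add: field_simps)
  then show ?case
    using step by (simp add: pseq_Suc pstep_def del: pseq.simps chebU.simps)
qed

lemma pseq'_eq_chebU_ratio:
  assumes "0 \<le> e" and "1 \<le> j"
  shows "pseq' e j = (chebU (2 + e) (j + 1) - chebU (2 + e) j) / (chebU (2 + e) j - chebU (2 + e) (j - 1))"
  using assms(2)
proof (induction j rule: dec_induct)
  case base
  then show ?case by simp
next
  case (step j)
  obtain i where i: "j = Suc i"
    using step(1) by (cases j) auto
  have "1 \<le> chebU (2 + e) (Suc j) - chebU (2 + e) j" "1 \<le> chebU (2 + e) j - chebU (2 + e) i"
    using chebU_Suc_minus_ge_1[of "2 + e" j] chebU_Suc_minus_ge_1[of "2 + e" i] assms(1) i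
    by (simp_all del: chebU.simps)
  then have "2 + e - (chebU (2 + e) j - chebU (2 + e) i) / (chebU (2 + e) (j + 1) - chebU (2 + e) j)
      = (chebU (2 + e) (Suc j + 1) - chebU (2 + e) (Suc j)) / (chebU (2 + e) (Suc j) - chebU (2 + e) j)"
    using i by (simp add: field_simps)
  then show ?case
    using step i by (simp add: pseq'_Suc pstep_def del: pseq'.simps chebU.simps)
qed

lemma prod_pseq:
  assumes "0 \<le> e"
  shows "(\<Prod>j = 1..n. pseq e j) = chebU (2 + e) (n + 1)"
proof (induction n)
  case 0
  then show ?case by simp
next
  case (Suc n)
  have "0 < chebU (2 + e) (n + 1)"
    using chebU_pos[of "2 + e"] assms by simp
  then show ?case
    using Suc pseq_eq_chebU_ratio[OF assms, of "Suc n"] by (simp add: prod.cl_ivl_Suc del: pseq.simps)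
qed

lemma prod_pseq':
  assumes "0 \<le> e"
  shows "(\<Prod>j = 1..n. pseq' e j) = chebU (2 + e) (n + 1) - chebU (2 + e) n"
proof (induction n)
  case 0
  then show ?case by simp
next
  case (Suc n)
  have "1 \<le> chebU (2 + e) (n + 1) - chebU (2 + e) n"
    using chebU_Suc_minus_ge_1[of "2 + e"] assms by simp
  then show ?case
    using Suc pseq'_eq_chebU_ratio[OF assms, of "Suc n"] by (simp add: prod.cl_ivl_Suc del: pseq'.simps)
qed

lemma prod_pseq'_eq_prod_pseq:
  assumes "0 \<le> e" and "1 \<le> k"
  shows "(\<Prod>j = 1..k. pseq' e j) = (pseq e k - 1) * (\<Prod>j = 1..k - 1. pseq e j)"
proof -
  have "0 < chebU (2 + e) k"
    using assms by (intro chebU_pos) auto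
  then show ?thesis
    using assms prod_pseq[OF assms(1), of "k - 1"] prod_pseq'[OF assms(1), of k]
      pseq_eq_chebU_ratio[OF assms(1), of k]
    by (simp add: field_simps)
qed

theorem lemma1:
  fixes e :: real
  assumes "0 \<le> e" and "e < 1"
  shows
    "(\<forall>j\<ge>1. 1 \<le> pseq' e j \<and> pseq' e j \<le> pplus e \<and> pplus e < pseq e j
             \<and> pseq e j \<le> 1 + 1 / real j + real j * e)
     \<and> (\<forall>j\<ge>1. pseq e (j + 1) < pseq e j)
     \<and> (\<forall>j\<ge>1. pseq' e j \<le> pseq' e (j + 1))
     \<and> (\<forall>l k. 1 \<le> k \<and> k < l div 2 \<longrightarrow>
             Ginv e l $$ (k - 1, k - 1) < Ginv e l $$ (k, k))
     \<and> (\<forall>j\<ge>2. pseq e j - pplus e \<le> 1 / (1 + sqrt e) ^ (j - 2)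
             \<and> pplus e - pseq' e j \<le> sqrt e / (1 + sqrt e) ^ (j - 2))
     \<and> (\<forall>k\<ge>2. (\<Prod>j=1..k. pseq' e j) = (pseq e k - 1) * (\<Prod>j=1..k-1. pseq e j))"
proof (intro conjI allI impI)
  fix j :: nat
  assume "1 \<le> j"
  then show "1 \<le> pseq' e j" "pseq' e j \<le> pplus e" "pplus e < pseq e j"
    "pseq e j \<le> 1 + 1 / real j + real j * e" "pseq e (j + 1) < pseq e j" "pseq' e j \<le> pseq' e (j + 1)"
    using pseq_bounds[OF assms(1)] pseq'_bounds[OF assms(1)] by auto
next
  fix l k :: nat
  assume "1 \<le> k \<and> k < l div 2"
  then show "Ginv e l $$ (k - 1, k - 1) < Ginv e l $$ (k, k)"
    using Ginv_diagonal_less[OF assms(1)] by auto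
next
  fix j :: nat
  assume "2 \<le> j"
  then show "pseq e j - pplus e \<le> 1 / (1 + sqrt e) ^ (j - 2)"
    and "pplus e - pseq' e j \<le> sqrt e / (1 + sqrt e) ^ (j - 2)"
    using pseq_minus_pplus_le pplus_minus_pseq'_le assms(1) by auto
next
  fix k :: nat
  assume "2 \<le> k"
  then show "(\<Prod>j=1..k. pseq' e j) = (pseq e k - 1) * (\<Prod>j=1..k-1. pseq e j)"
    using prod_pseq'_eq_prod_pseq[OF assms(1)] by simp
qed

end
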